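(* Let $\alpha>0$, $\beta\ge0$, $c_{\mathrm{cp}}\in(-1,1)$, $h,\mu,s,\Omega\in\mathbb R$, and write $\beta^+=\beta/(1+c_{\mathrm{cp}})$, $\beta^-=\beta/(1-c_{\mathrm{cp}})$. (i) Consider the planar system (dynamics on the chart $\theta=0$) $p'=h-\Omega-\alpha sp+sq-(p^2-q^2+\mu)$, $q'=\alpha\Omega-\beta^+-sp-\alpha sq-2pq$. If $\Omega=\frac{\beta^+}{\alpha}-\frac{s^2}{2}$, then the line $\{q=-\frac s2\}$ is invariant, and on $\{q\neq-\frac s2\}$ the function $H^0(p,q)=-\frac{p^2+q^2+\alpha sp+sq-h+\beta^+/\alpha+\mu}{q+\frac s2}$ is constant along solutions, the system being Hamiltonian with Hamiltonian $H^0$ after a rescaling of the independent variable. (ii) Consider the planar system (dynamics on the chart $\theta=\pi$) $p'=h-\Omega-\alpha sp+sq+(p^2-q^2+\mu)$, $q'=\alpha\Omega-\beta^--sp-\alpha sq+2pq$. If $\Omega=\frac{\beta^-}{\alpha}+\frac{s^2}{2}$, then the line $\{q=\frac s2\}$ is invariant, and on $\{q\neq\frac s2\}$ the function $H^\pi(p,q)=\frac{p^2+q^2-\alpha sp-sq+h-\beta^-/\alpha+\mu}{q-\frac s2}$ is constant along solutions, the system being Hamiltonian with Hamiltonian $H^\pi$ after a rescaling of the independent variable. (iii) Moreover, in case (i), if additionally $\Omega>h-\mu+\frac{s^2}{4}(\alpha^2-1)$, each half plane $\{q\le-\frac s2\}$, $\{q\ge-\frac s2\}$ is filled with periodic orbits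 encircling the equilibria of the system in (i); in case (ii), if additionally $\Omega<h+\mu+\frac{s^2}{4}(1+\alpha^2)$, each half plane $\{q\le\frac s2\}$, $\{q\ge\frac s2\}$ is filled with periodic orbits encircling the equilibria of the system in (ii).
   Context: These planar systems are the restrictions to the invariant planes $\theta=0$ and $\theta=\pi$ of the desingularized coherent structure system $\theta'=\sin(\theta)p$, $p'=h-\Omega-\alpha sp+sq-(p^2-q^2+\mu)\cos\theta$, $q'=\alpha\Omega-\beta/(1+c_{\mathrm{cp}}\cos\theta)-sp-\alpha sq-2pq\cos\theta$ arising from the Landau–Lifshitz–Gilbert–Slonczewski equation with speed $s$ and frequency $\Omega$.
   Formalization: In part (iii), case (ii) assumes $\Omega<h+\mu+\frac{s^2}{4}(1-\alpha^2)$ in place of $\Omega<h+\mu+\frac{s^2}{4}(1+\alpha^2)$. The statement above fails without it. *)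

theory Defs
  imports "HOL-Complex_Analysis.Complex_Analysis"
begin

definition F0 :: "real \<Rightarrow> real \<Rightarrow> real \<Rightarrow> real \<Rightarrow> real \<Rightarrow> real \<Rightarrow> real \<Rightarrow> real \<times> real \<Rightarrow> real \<times> real" where
  "F0 \<alpha> \<beta> c h \<mu> s \<Omega> = (\<lambda>(p, q).
     (h - \<Omega> - \<alpha> * s * p + s * q - (p^2 - q^2 + \<mu>),
      \<alpha> * \<Omega> - \<beta>/(1+c) - s * p - \<alpha> * s * q - 2 * p * q))"

definition Fpi :: "real \<Rightarrow> real \<Rightarrow> real \<Rightarrow> real \<Rightarrow> real \<Rightarrow> real \<Rightarrow> real \<Rightarrow> real \<times> real \<Rightarrow> real \<times> real" where
  "Fpi \<alpha> \<beta> c h \<mu> s \<Omega> = (\<lambda>(p, q).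
     (h - \<Omega> - \<alpha> * s * p + s * q + (p^2 - q^2 + \<mu>),
      \<alpha> * \<Omega> - \<beta>/(1-c) - s * p - \<alpha> * s * q + 2 * p * q))"

definition H0 :: "real \<Rightarrow> real \<Rightarrow> real \<Rightarrow> real \<Rightarrow> real \<Rightarrow> real \<Rightarrow> real \<times> real \<Rightarrow> real" where
  "H0 \<alpha> \<beta> c h \<mu> s = (\<lambda>(p, q).
     - (p^2 + q^2 + \<alpha> * s * p + s * q - h + (\<beta>/(1+c))/\<alpha> + \<mu>) / (q + s/2))"

definition Hpi :: "real \<Rightarrow> real \<Rightarrow> real \<Rightarrow> real \<Rightarrow> real \<Rightarrow> real \<Rightarrow> real \<times> real \<Rightarrow> real" where
  "Hpi \<alpha> \<beta> c h \<mu> s = (\<lambda>(p, q).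
     (p^2 + q^2 - \<alpha> * s * p - s * q + h - (\<beta>/(1-c))/\<alpha> + \<mu>) / (q - s/2))"

definition is_solution :: "(real \<times> real \<Rightarrow> real \<times> real) \<Rightarrow> real set \<Rightarrow> (real \<Rightarrow> real \<times> real) \<Rightarrow> bool" where
  "is_solution F I x \<longleftrightarrow> is_interval I \<and>
     (\<forall>t\<in>I. (x has_vector_derivative F (x t)) (at t within I))"

definition line_invariant :: "(real \<times> real \<Rightarrow> real \<times> real) \<Rightarrow> real \<Rightarrow> bool" where
  "line_invariant F l \<longleftrightarrow> (\<forall>I x t0 t. is_solution F I x \<and> t0 \<in> I \<and> t \<in> I \<and> snd (x t0) = l
       \<longrightarrow> snd (x t) = l)"

definition conserved_off_line :: "(real \<times> real \<Rightarrow> real \<times> real) \<Rightarrow> (real \<times> real \<Rightarrow> real) \<Rightarrow> real \<Rightarrow> bool" where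
  "conserved_off_line F H l \<longleftrightarrow> (\<forall>I x. is_solution F I x \<and> (\<forall>t\<in>I. snd (x t) \<noteq> l)
       \<longrightarrow> (\<exists>C. \<forall>t\<in>I. H (x t) = C))"

text \<open>On q \<noteq> l, the field is (q-l)^2 times the Hamiltonian field
  (p' = -dH/dq, q' = dH/dp) of H, i.e. Hamiltonian after the rescaling
  d tau = (q-l)^2 dt of the independent variable.\<close>
definition rescaled_hamiltonian :: "(real \<times> real \<Rightarrow> real \<times> real) \<Rightarrow> (real \<times> real \<Rightarrow> real) \<Rightarrow> real \<Rightarrow> bool" where
  "rescaled_hamiltonian F H l \<longleftrightarrow> (\<forall>p q. q \<noteq> l \<longrightarrow>
     (\<exists>Hp Hq. (H has_derivative (\<lambda>(dp, dq). Hp * dp + Hq * dq)) (at (p, q)) \<and>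
              F (p, q) = ((q - l)^2  *  (- Hq), (q - l)^2  *  Hp)))"

definition to_complex :: "real \<times> real \<Rightarrow> complex" where
  "to_complex z = Complex (fst z) (snd z)"

definition periodic_solution :: "(real \<times> real \<Rightarrow> real \<times> real) \<Rightarrow> real \<times> real \<Rightarrow> real \<Rightarrow> (real \<Rightarrow> real \<times> real) \<Rightarrow> bool" where
  "periodic_solution F z0 T x \<longleftrightarrow> is_solution F UNIV x \<and> x 0 = z0 \<and> T > 0 \<and> (\<forall>t. x (t + T) = x t)"

definition filled_with_periodic_orbits :: "(real \<times> real \<Rightarrow> real \<times> real) \<Rightarrow> (real \<times> real) set \<Rightarrow> bool" where
  "filled_with_periodic_orbits F S \<longleftrightarrow>
     (\<exists>e\<in>S. F e = 0) \<and>
     (\<forall>z0\<in>S. F z0 \<noteq> 0 \<longrightarrow>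
        (\<exists>x T. periodic_solution F z0 T x \<and> (\<forall>t. x t \<in> S) \<and>
           (\<forall>e\<in>S. F e = 0 \<longrightarrow>
              to_complex e \<notin> path_image (\<lambda>u. to_complex (x (T * u))) \<and>
              winding_number (\<lambda>u. to_complex (x (T * u))) (to_complex e) \<noteq> 0)))"

end

theory Submission
  imports Defs
begin

(* Under the frequency condition both planar systems are, in the complex coordinate w = p + iq,
   complex Riccati equations w' = -sigma (K + (w - c)^2) with sigma = 1 (chart 0) or
   sigma = -1 (chart pi).  The imaginary part of w - c then obeys a linear equation, so the
   line Im w = Im c is invariant, and -sigma (|w - c|^2 + K) / Im (w - c) is a Hamiltonian
   for the field divided by (Im (w - c))^2.  If K = k^2 > 0, the Cayley transform
   u = (ik - z) / (ik + z) of z = w - c turns z' = -(k^2 + z^2), the equation after rescaling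
   time by sigma, into the linear equation u' = -2iku; hence
   every non-stationary solution is a Moebius image of a circle |u| = const: it has period
   pi / k, stays in its half plane, and winds once around the equilibrium c + ik or c - ik
   lying in that half plane. *)

lemma is_solution_continuous_on:
  assumes "is_solution F I x"
  shows "continuous_on I x"
  using assms unfolding is_solution_def by (intro continuous_on_vector_derivative) blast

lemma is_solution_has_real_derivative_snd:
  assumes "is_solution F I x" "t \<in> I"
  shows "((\<lambda>t. snd (x t)) has_real_derivative snd (F (x t))) (at t within I)"
proof -
  have "(x has_derivative (\<lambda>h. h *\<^sub>R F (x t))) (at t within I)"
    using assms unfolding is_solution_def has_vector_derivative_def by blast
  from has_derivative_snd[OF this] show ?thesis
    by (simp add: has_field_derivative_def mult_commute_abs)
qed

lemma linear_ode_zero_iff: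
  fixes y g :: "real \<Rightarrow> real"
  assumes g: "continuous_on {a..b} g"
    and y: "\<And>t. t \<in> {a..b} \<Longrightarrow> (y has_real_derivative y t * g t) (at t within {a..b})"
    and "s \<in> {a..b}" "t \<in> {a..b}"
  shows "y s = 0 \<longleftrightarrow> y t = 0"
proof -
  define G where "G u = integral {a..u} g" for u
  have "\<exists>C. \<forall>u\<in>{a..b}. y u * exp (- G u) = C"
  proof (rule has_field_derivative_zero_constant)
    fix u assume u: "u \<in> {a..b}"
    have "((\<lambda>u. y u * exp (- G u)) has_real_derivative
        y u * g u * exp (- G u) + exp (- G u) * - g u * y u) (at u within {a..b})"
      unfolding G_def
      by (intro DERIV_mult y[OF u] DERIV_exp[THEN DERIV_chain2] DERIV_minus integral_has_real_derivative[OF g u])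
    then show "((\<lambda>u. y u * exp (- G u)) has_field_derivative 0) (at u within {a..b})"
      by simp
  qed simp
  then have "y s * exp (- G s) = y t * exp (- G t)"
    using assms(3,4) by metis
  then show ?thesis by auto
qed

lemma line_invariant_if_snd_factors:
  assumes snd_F: "\<And>z. snd (F z) = (snd z - l) * g z" and g: "continuous_on UNIV g"
  shows "line_invariant F l"
  unfolding line_invariant_def
proof (intro allI impI, elim conjE)
  fix I x t0 t
  assume sol: "is_solution F I x" and "t0 \<in> I" "t \<in> I" and on_line: "snd (x t0) = l"
  define a b where "a = min t0 t" and "b = max t0 t"
  have t0: "t0 \<in> {a..b}" and t: "t \<in> {a..b}" unfolding a_def b_def by auto
  have "a \<in> I" "b \<in> I"
    using \<open>t0 \<in> I\<close> \<open>t \<in> I\<close> unfolding a_def b_def by (simp_all add: min_def max_def)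
  then have sub: "{a..b} \<subseteq> I"
    using sol unfolding is_solution_def is_interval_1 by (meson atLeastAtMost_iff subsetI)
  have "continuous_on {a..b} (g \<circ> x)"
    using is_solution_continuous_on[OF sol] sub
    by (intro continuous_on_compose continuous_on_subset[OF g]) (auto intro: continuous_on_subset)
  moreover have "((\<lambda>\<tau>. snd (x \<tau>) - l) has_real_derivative (snd (x \<tau>) - l) * (g \<circ> x) \<tau>)
      (at \<tau> within {a..b})" if "\<tau> \<in> {a..b}" for \<tau>
  proof -
    have "((\<lambda>\<tau>. snd (x \<tau>)) has_real_derivative snd (F (x \<tau>))) (at \<tau> within {a..b})"
      using is_solution_has_real_derivative_snd[OF sol] that sub by (meson DERIV_subset subsetD)
    then have "((\<lambda>\<tau>. snd (x \<tau>) - l) has_real_derivative snd (F (x \<tau>)) - 0) (at \<tau> within {a..b})"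
      by (intro DERIV_diff DERIV_const)
    then show ?thesis by (simp add: snd_F)
  qed
  ultimately have "snd (x t0) - l = 0 \<longleftrightarrow> snd (x t) - l = 0"
    by (rule linear_ode_zero_iff[OF _ _ t0 t])
  with on_line show "snd (x t) = l" by simp
qed

lemma conserved_off_line_if_rescaled_hamiltonian:
  assumes R: "rescaled_hamiltonian F H l"
  shows "conserved_off_line F H l"
  unfolding conserved_off_line_def
proof (intro allI impI, elim conjE)
  fix I x
  assume sol: "is_solution F I x" and off: "\<forall>t\<in>I. snd (x t) \<noteq> l"
  have "convex I" using sol unfolding is_solution_def by (simp add: is_interval_convex_1)
  then show "\<exists>C. \<forall>t\<in>I. H (x t) = C"
  proof (rule has_derivative_zero_constant)
    fix t assume t: "t \<in> I"
    obtain p q where pq: "x t = (p, q)" by fastforce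
    obtain Hp Hq where H: "(H has_derivative (\<lambda>(dp, dq). Hp * dp + Hq * dq)) (at (p, q))"
      and F: "F (p, q) = ((q - l)^2 * (- Hq), (q - l)^2 * Hp)"
      using R off t pq unfolding rescaled_hamiltonian_def by (metis snd_conv)
    have "(x has_derivative (\<lambda>h. h *\<^sub>R F (p, q))) (at t within I)"
      using sol t pq unfolding is_solution_def has_vector_derivative_def by metis
    from has_derivative_compose[OF this, of H] H
    have "((\<lambda>t. H (x t)) has_derivative (\<lambda>h. (\<lambda>(dp, dq). Hp * dp + Hq * dq) (h *\<^sub>R F (p, q))))
        (at t within I)" by (simp add: pq)
    \<comment> \<open>the gradient of H is orthogonal to F\<close>
    moreover have "(\<lambda>h. (\<lambda>(dp, dq). Hp * dp + Hq * dq) (h *\<^sub>R F (p, q))) = (\<lambda>h. 0)"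
      by (simp add: F algebra_simps)
    ultimately show "((\<lambda>t. H (x t)) has_derivative (\<lambda>h. 0)) (at t within I)" by simp
  qed
qed

section \<open>The complex Riccati equation\<close>

lemma to_complex_Re_Im [simp]: "to_complex (Re v, Im v) = v"
  by (simp add: to_complex_def)

lemma to_complex_inject: "to_complex z = to_complex z' \<longleftrightarrow> z = z'"
  by (cases z; cases z') (simp add: to_complex_def complex_eq_iff)

lemma to_complex_eq_0_iff: "to_complex z = 0 \<longleftrightarrow> z = 0"
  by (cases z) (simp add: to_complex_def complex_eq_iff zero_prod_def)

lemma has_vector_derivative_Re_Im:
  assumes "(f has_vector_derivative f') (at t within S)"
  shows "((\<lambda>t. (Re (f t), Im (f t))) has_vector_derivative (Re f', Im f')) (at t within S)"
  by (intro has_vector_derivative_Pair has_real_derivative_iff_has_vector_derivative[THEN iffD1]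
      has_field_derivative_Re has_field_derivative_Im assms)

(* The inverse Cayley transform of the linear flow b e^(-2ikt). *)
definition riccati_orbit :: "real \<Rightarrow> complex \<Rightarrow> real \<Rightarrow> complex" where
  "riccati_orbit k b t =
     \<i> * of_real k * (1 - b * exp (- (2 * \<i> * of_real k * of_real t)))
                    / (1 + b * exp (- (2 * \<i> * of_real k * of_real t)))"

lemma norm_mult_exp_imaginary:
  fixes k t :: real
  shows "norm (b * exp (- (2 * \<i> * of_real k * of_real t))) = norm b"
proof -
  have "- (2 * \<i> * of_real k * of_real t) = \<i> * of_real (- 2 * k * t)" by simp
  then show ?thesis by (simp only: norm_mult norm_exp_eq_Re) simp
qed

lemma riccati_orbit_denominator_nonzero:
  assumes "norm b \<noteq> 1"
  shows "1 + b * exp (- (2 * \<i> * of_real k * of_real t)) \<noteq> 0"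
proof
  assume "1 + b * exp (- (2 * \<i> * of_real k * of_real t)) = 0"
  then have "norm (b * exp (- (2 * \<i> * of_real k * of_real t))) = 1"
    by (metis add_eq_0_iff norm_minus_cancel norm_one)
  with assms show False by (simp add: norm_mult_exp_imaginary)
qed

lemma riccati_orbit_has_vector_derivative:
  assumes "norm b \<noteq> 1"
  shows "(riccati_orbit k b has_vector_derivative - (of_real k ^ 2 + riccati_orbit k b t ^ 2)) (at t)"
proof -
  define U where "U z = b * exp (- (2 * \<i> * of_real k * z))" for z
  define D where "D = 1 + U (of_real t)"
  have D: "D \<noteq> 0"
    using riccati_orbit_denominator_nonzero[OF assms] by (simp add: D_def U_def)
  have U: "U (of_real t) = D - 1" by (simp add: D_def)
  have dU: "(U has_field_derivative - 2 * \<i> * of_real k * U z) (at z)" for z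
    unfolding U_def by (rule derivative_eq_intros refl)+ (simp add: algebra_simps)
  have "((\<lambda>z. \<i> * of_real k * (1 - U z) / (1 + U z)) has_field_derivative
      - (of_real k ^ 2 + (\<i> * of_real k * (1 - U (of_real t)) / (1 + U (of_real t))) ^ 2)) (at (of_real t))"
    by (rule derivative_eq_intros dU refl)+ (use D in \<open>simp_all add: U field_simps power2_eq_square\<close>)
  then show ?thesis
    unfolding riccati_orbit_def U_def by (rule has_vector_derivative_real_field)
qed

lemma riccati_orbit_periodic:
  assumes "k \<noteq> 0"
  shows "riccati_orbit k b (t + of_int n * pi / k) = riccati_orbit k b t"
proof -
  have "- (2 * \<i> * of_real k * of_real (t + of_int n * pi / k))
      = - (2 * \<i> * of_real k * of_real t) + \<i> * (of_int (- n) * (of_real pi * 2))"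
    using assms by (simp add: field_simps)
  then show ?thesis unfolding riccati_orbit_def by (simp only: exp_plus_2pin)
qed

definition cayley :: "real \<Rightarrow> complex \<Rightarrow> complex" where
  "cayley k w = (\<i> * of_real k - w) / (\<i> * of_real k + w)"

lemma riccati_orbit_cayley_0:
  assumes "k \<noteq> 0" and "\<i> * of_real k + w \<noteq> 0"
  shows "riccati_orbit k (cayley k w) 0 = w"
proof -
  have plus: "1 + cayley k w = 2 * (\<i> * of_real k) / (\<i> * of_real k + w)"
    and minus: "1 - cayley k w = 2 * w / (\<i> * of_real k + w)"
    using assms(2) by (simp_all add: cayley_def field_simps)
  have "riccati_orbit k (cayley k w) 0 = \<i> * of_real k * (1 - cayley k w) / (1 + cayley k w)"
    by (simp add: riccati_orbit_def)
  also have "\<dots> = w"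
    unfolding plus minus using assms by (simp add: divide_divide_times_eq)
  finally show ?thesis .
qed

lemma one_minus_norm_cayley_squared:
  assumes "\<i> * of_real k + w \<noteq> 0"
  shows "(1 - (norm (cayley k w))\<^sup>2) * (norm (\<i> * of_real k + w))\<^sup>2 = 4 * k * Im w"
proof -
  have "norm (cayley k w) = norm (\<i> * of_real k - w) / norm (\<i> * of_real k + w)"
    by (simp add: cayley_def norm_divide)
  then have "(1 - (norm (cayley k w))\<^sup>2) * (norm (\<i> * of_real k + w))\<^sup>2
      = (norm (\<i> * of_real k + w))\<^sup>2 - (norm (\<i> * of_real k - w))\<^sup>2"
    using assms by (simp add: power_divide left_diff_distrib)
  also have "\<dots> = 4 * k * Im w"
    by (simp add: cmod_power2) (simp add: algebra_simps power2_eq_square)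
  finally show ?thesis .
qed

lemma sgn_one_minus_norm_cayley:
  assumes "k > 0" and "\<i> * of_real k + w \<noteq> 0"
  shows "sgn (1 - norm (cayley k w)) = sgn (Im w)"
proof -
  define P where "P = (1 + norm (cayley k w)) * (norm (\<i> * of_real k + w))\<^sup>2"
  have "(1 - norm (cayley k w)) * P = 4 * k * Im w"
    using one_minus_norm_cayley_squared[OF assms(2)] by (simp add: P_def power2_eq_square algebra_simps)
  then have "sgn (1 - norm (cayley k w)) * sgn P = sgn (4 * k) * sgn (Im w)"
    by (metis sgn_mult)
  moreover have "P > 0"
    using assms(2) by (simp add: P_def add_pos_nonneg)
  ultimately show ?thesis
    using assms(1) by simp
qed

lemma Re_one_minus_div_one_plus: "Re ((1 - u) / (1 + u)) = (1 - (norm u)\<^sup>2) / (norm (1 + u))\<^sup>2"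
proof -
  have "Re (1 - u) * Re (1 + u) + Im (1 - u) * Im (1 + u) = 1 - (norm u)\<^sup>2"
    by (simp add: cmod_power2) (simp add: algebra_simps power2_eq_square)
  then show ?thesis by (simp add: Re_divide')
qed

lemma sgn_Im_riccati_orbit:
  assumes "k > 0"
  shows "sgn (Im (riccati_orbit k b t)) = sgn (1 - norm b)"
proof -
  define u where "u = b * exp (- (2 * \<i> * of_real k * of_real t))"
  define z where "z = (1 - u) / (1 + u)"
  have norm_u: "norm u = norm b"
    by (simp add: u_def norm_mult_exp_imaginary)
  have "riccati_orbit k b t = \<i> * (of_real k * z)"
    by (simp add: riccati_orbit_def u_def z_def)
  then have "Im (riccati_orbit k b t) = k * Re z"
    by simp
  also have "\<dots> = k * ((1 - norm b) * (1 + norm b) / (norm (1 + u))\<^sup>2)"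
    by (simp add: z_def Re_one_minus_div_one_plus norm_u power2_eq_square algebra_simps)
  finally have Im: "Im (riccati_orbit k b t) = k * ((1 - norm b) * (1 + norm b) / (norm (1 + u))\<^sup>2)" .
  show ?thesis
  proof (cases "1 + u = 0")
    case True
    then have "norm b = 1"
      by (metis add_eq_0_iff norm_minus_cancel norm_one norm_u)
    then show ?thesis
      using Im by simp
  next
    case False
    have "sgn (1 + norm b) = 1"
      by (simp add: add_pos_nonneg)
    with False show ?thesis
      using Im assms by (simp add: sgn_mult)
  qed
qed

lemma winding_number_moebius_circle:
  fixes \<gamma> :: "real \<Rightarrow> complex" and n :: int
  assumes "norm d < 1" and "A \<noteq> 0"
    and \<gamma>: "\<And>v. \<gamma> v - z = A * exp (2 * pi * \<i> * of_int n * v) / (1 + d * exp (2 * pi * \<i> * of_int n * v))"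
  shows "z \<notin> path_image \<gamma>" and "winding_number \<gamma> z = n"
proof -
  define e where "e v = exp (2 * pi * \<i> * of_int n * of_real v)" for v
  have pos: "Re (1 + d * e v) > 0" for v
  proof -
    have "norm (e v) = 1" by (simp add: e_def norm_exp_eq_Re)
    then have "\<bar>Re (d * e v)\<bar> < 1"
      using abs_Re_le_cmod[of "d * e v"] assms(1) by (simp add: norm_mult)
    then show ?thesis by simp
  qed
  have slit: "1 + d * e v \<notin> \<real>\<^sub>\<le>\<^sub>0" for v
    using pos[of v] by (metis Re_complex_of_real nonpos_Reals_cases not_less)
  have nz: "1 + d * e v \<noteq> 0" for v
    using pos[of v] by (metis zero_complex.simps(1) less_irrefl)
  \<comment> \<open>a continuous logarithm of \<gamma> - z along [0, 1]\<close>
  define p where "p v = Ln A + 2 * pi * \<i> * of_int n * of_real v - Ln (1 + d * e v)" for v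
  have "exp (p v) = \<gamma> v - z" for v
    using assms(2) nz[of v] by (simp add: p_def \<gamma> e_def exp_diff exp_add)
  then have exp_p: "(\<lambda>v. \<gamma> v - z) = exp \<circ> p" by auto
  have "path p"
    unfolding path_def p_def e_def using slit
    by (intro continuous_intros) (auto simp: e_def)
  moreover have "e 1 = 1" and "e 0 = 1"
    unfolding e_def using exp_integer_2pi[of "of_int n"] by (simp_all add: mult.commute mult.left_commute)
  ultimately have "winding_number (exp \<circ> p) 0 = n"
    by (simp add: winding_number_compose_exp pathfinish_def pathstart_def p_def field_simps)
  then show "winding_number \<gamma> z = n"
    by (simp add: winding_number_offset[of \<gamma> z] exp_p)
  show "z \<notin> path_image \<gamma>"
    using exp_p by (auto simp: path_image_def fun_eq_iff) (metis exp_not_eq_zero right_minus_eq)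
qed

lemma riccati_orbit_winding_number:
  fixes n :: int and c :: complex
  assumes k: "k > 0" and b: "norm b \<noteq> 1" "b \<noteq> 0" and n: "n \<noteq> 0"
  defines "e \<equiv> of_real (sgn (1 - norm b)) * \<i> * of_real k"
    and "\<gamma> \<equiv> \<lambda>v. c + riccati_orbit k b (of_int n * pi / k * v)"
  shows "c + e \<notin> path_image \<gamma>" and "winding_number \<gamma> (c + e) \<noteq> 0"
proof -
  define E where "E v = exp (2 * pi * \<i> * of_int n * of_real v)" for v
  have norm_E: "norm (E v) = 1" for v
    by (simp add: E_def norm_exp_eq_Re)
  then have E_nz: "E v \<noteq> 0" and E_b: "E v + b \<noteq> 0" for v
    using b(1) by (auto simp: add_eq_0_iff dest: arg_cong[of _ _ norm])
  have "exp (- (2 * \<i> * of_real k * of_real (of_int n * pi / k * v))) = exp (- (2 * pi * \<i> * of_int n * of_real v))" for v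
    using k by (simp add: field_simps)
  moreover have "(1 - b / F) / (1 + b / F) = (F - b) / (F + b)" if "F \<noteq> 0" for F
    using that by (simp add: divide_simps)
  ultimately have orbit: "\<gamma> v = c + \<i> * of_real k * (E v - b) / (E v + b)" for v
    using E_nz[of v] by (simp add: \<gamma>_def riccati_orbit_def E_def exp_minus divide_inverse)
  have "\<exists>A d m. norm d < 1 \<and> A \<noteq> 0 \<and> m \<noteq> (0::int) \<and>
      (\<forall>v. \<gamma> v - (c + e) = A * exp (2 * pi * \<i> * of_int m * v) / (1 + d * exp (2 * pi * \<i> * of_int m * v)))"
  proof (cases "norm b < 1")
    case True
    then have "e = \<i> * of_real k"
      by (simp add: e_def)
    have "exp (2 * pi * \<i> * of_int (- n) * of_real v) = 1 / E v" for v
      by (simp add: E_def exp_minus divide_inverse)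
    moreover have "\<gamma> v - (c + e) = (- 2 * \<i> * of_real k * b) * (1 / E v) / (1 + b * (1 / E v))" for v
      using E_nz[of v] E_b[of v] unfolding orbit \<open>e = \<i> * of_real k\<close> by (simp add: field_simps)
    ultimately show ?thesis
      using True k b(2) n by (intro exI[of _ "- 2 * \<i> * of_real k * b"] exI[of _ b] exI[of _ "- n"]) simp
  next
    case False
    then have "e = - \<i> * of_real k"
      using b(1) by (simp add: e_def)
    from False have "norm (1 / b) < 1"
      using b(1) by (simp add: norm_divide divide_less_eq_1)
    moreover have "\<gamma> v - (c + e) = (2 * \<i> * of_real k / b) * E v / (1 + (1 / b) * E v)" for v
      using E_nz[of v] E_b[of v] b(2) unfolding orbit \<open>e = - \<i> * of_real k\<close> by (simp add: field_simps)
    ultimately show ?thesis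
      using k b(2) n by (intro exI[of _ "2 * \<i> * of_real k / b"] exI[of _ "1 / b"] exI[of _ n]) (simp add: E_def)
  qed
  then obtain A d m where "norm d < 1" "A \<noteq> 0" "m \<noteq> 0"
    and "\<And>v. \<gamma> v - (c + e) = A * exp (2 * pi * \<i> * of_int m * v) / (1 + d * exp (2 * pi * \<i> * of_int m * v))"
    by blast
  from winding_number_moebius_circle[OF this(1,2,4)] \<open>m \<noteq> 0\<close>
  show "c + e \<notin> path_image \<gamma>" and "winding_number \<gamma> (c + e) \<noteq> 0"
    by simp_all
qed

definition riccati_field :: "real \<Rightarrow> real \<Rightarrow> complex \<Rightarrow> real \<times> real \<Rightarrow> real \<times> real" where
  "riccati_field \<sigma> K c z = (let v = - of_real \<sigma> * (of_real K + (to_complex z - c)\<^sup>2) in (Re v, Im v))"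

definition riccati_hamiltonian :: "real \<Rightarrow> real \<Rightarrow> complex \<Rightarrow> real \<times> real \<Rightarrow> real" where
  "riccati_hamiltonian \<sigma> K c = (\<lambda>(p, q). - \<sigma> * ((p - Re c)\<^sup>2 + (q - Im c)\<^sup>2 + K) / (q - Im c))"

lemma to_complex_riccati_field:
  "to_complex (riccati_field \<sigma> K c z) = - of_real \<sigma> * (of_real K + (to_complex z - c)\<^sup>2)"
  unfolding riccati_field_def Let_def by (rule to_complex_Re_Im)

lemma riccati_field_line_invariant: "line_invariant (riccati_field \<sigma> K c) (Im c)"
proof (rule line_invariant_if_snd_factors)
  show "snd (riccati_field \<sigma> K c z) = (snd z - Im c) * (- 2 * \<sigma> * (fst z - Re c))" for z
    by (simp add: riccati_field_def to_complex_def power2_eq_square algebra_simps)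
qed (intro continuous_intros)

lemma riccati_field_rescaled_hamiltonian:
  "rescaled_hamiltonian (riccati_field \<sigma> K c) (riccati_hamiltonian \<sigma> K c) (Im c)"
  unfolding rescaled_hamiltonian_def
proof (intro allI impI exI conjI)
  fix p q assume q: "q \<noteq> Im c"
  define y where "y = q - Im c"
  have y: "y \<noteq> 0" and q_eq: "q = y + Im c"
    using q by (simp_all add: y_def)
  let ?Hp = "- 2 * \<sigma> * (p - Re c) / (q - Im c)"
  let ?Hq = "\<sigma> * ((p - Re c)\<^sup>2 - (q - Im c)\<^sup>2 + K) / (q - Im c)\<^sup>2"
  show "(riccati_hamiltonian \<sigma> K c has_derivative (\<lambda>(dp, dq). ?Hp * dp + ?Hq * dq)) (at (p, q))"
    unfolding riccati_hamiltonian_def case_prod_beta'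
    apply (rule derivative_eq_intros refl | simp add: q)+
    apply (rule ext)
    subgoal for z using y unfolding q_eq by (cases z) (simp add: field_simps power2_eq_square)
    done
  show "riccati_field \<sigma> K c (p, q) = ((q - Im c)\<^sup>2 * - ?Hq, (q - Im c)\<^sup>2 * ?Hp)"
    using y unfolding q_eq by (simp add: riccati_field_def to_complex_def field_simps power2_eq_square)
qed

lemma riccati_field_eq_0_iff:
  assumes "\<sigma> \<noteq> 0"
  shows "riccati_field \<sigma> (k\<^sup>2) c z = 0 \<longleftrightarrow>
    to_complex z - c = \<i> * of_real k \<or> to_complex z - c = - \<i> * of_real k"
proof -
  have "riccati_field \<sigma> (k\<^sup>2) c z = 0 \<longleftrightarrow> of_real (k\<^sup>2) + (to_complex z - c)\<^sup>2 = 0"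
    using assms by (simp flip: to_complex_eq_0_iff add: to_complex_riccati_field)
  also have "\<dots> \<longleftrightarrow> (to_complex z - c)\<^sup>2 = (\<i> * of_real k)\<^sup>2"
    by (auto simp: power_mult_distrib add_eq_0_iff)
  finally show ?thesis
    by (simp add: power2_eq_iff)
qed

lemma riccati_field_solution:
  assumes "norm b \<noteq> 1"
  shows "is_solution (riccati_field \<sigma> (k\<^sup>2) c) UNIV
    (\<lambda>t. (Re (c + riccati_orbit k b (\<sigma> * t)), Im (c + riccati_orbit k b (\<sigma> * t))))"
    (is "is_solution _ _ ?x")
  unfolding is_solution_def
proof (intro conjI ballI)
  fix t
  define W where "W = riccati_orbit k b"
  let ?v = "of_real \<sigma> * - (of_real k ^ 2 + W (\<sigma> * t) ^ 2)"
  have "(W has_vector_derivative - (of_real k ^ 2 + W (\<sigma> * t) ^ 2)) (at (\<sigma> * t))"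
    unfolding W_def by (rule riccati_orbit_has_vector_derivative[OF assms])
  from vector_diff_chain_at[OF DERIV_cmult_Id[THEN has_real_derivative_iff_has_vector_derivative[THEN iffD1]] this]
  have "((\<lambda>t. c + W (\<sigma> * t)) has_vector_derivative ?v) (at t)"
    by (simp add: o_def add.commute[of c] has_vector_derivative_add_const scaleR_conv_of_real)
  then have "(?x has_vector_derivative (Re ?v, Im ?v)) (at t)"
    unfolding W_def by (rule has_vector_derivative_Re_Im)
  moreover have "to_complex (?x t) = c + W (\<sigma> * t)"
    unfolding W_def by (rule to_complex_Re_Im)
  then have "riccati_field \<sigma> (k\<^sup>2) c (?x t) = (Re ?v, Im ?v)"
    unfolding riccati_field_def Let_def by (simp add: algebra_simps)
  ultimately show "(?x has_vector_derivative riccati_field \<sigma> (k\<^sup>2) c (?x t)) (at t within UNIV)"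
    by simp
qed simp

lemma riccati_field_periodic_orbit:
  assumes k: "k > 0" and \<sigma>: "\<sigma> \<noteq> 0"
    and off_line: "snd z0 \<noteq> Im c" and moving: "riccati_field \<sigma> (k\<^sup>2) c z0 \<noteq> 0"
  defines "e \<equiv> c + of_real (sgn (snd z0 - Im c)) * \<i> * of_real k"
  obtains x T where "periodic_solution (riccati_field \<sigma> (k\<^sup>2) c) z0 T x"
    and "\<And>t. sgn (snd (x t) - Im c) = sgn (snd z0 - Im c)"
    and "e \<notin> path_image (\<lambda>u. to_complex (x (T * u)))"
    and "winding_number (\<lambda>u. to_complex (x (T * u))) e \<noteq> 0"
proof -
  define w0 where "w0 = to_complex z0 - c"
  have Im_w0: "Im w0 = snd z0 - Im c"
    by (simp add: w0_def to_complex_def)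
  have "w0 \<noteq> \<i> * of_real k" and "w0 \<noteq> - \<i> * of_real k"
    using moving riccati_field_eq_0_iff[OF \<sigma>] by (auto simp: w0_def)
  then have w0_ne: "\<i> * of_real k + w0 \<noteq> 0" and b_ne: "cayley k w0 \<noteq> 0"
    by (auto simp: cayley_def add_eq_0_iff)
  define b where "b = cayley k w0"
  have sgn_b: "sgn (1 - norm b) = sgn (snd z0 - Im c)"
    using sgn_one_minus_norm_cayley[OF k w0_ne] by (simp add: b_def Im_w0)
  then have b_1: "norm b \<noteq> 1"
    using off_line by (auto simp: sgn_0_0)
  define W where "W = riccati_orbit k b"
  define x where "x t = (Re (c + W (\<sigma> * t)), Im (c + W (\<sigma> * t)))" for t
  have x: "to_complex (x t) = c + W (\<sigma> * t)" for t
    unfolding x_def by (rule to_complex_Re_Im)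
  define T where "T = pi / (k * \<bar>\<sigma>\<bar>)"
  define n :: int where "n = (if \<sigma> > 0 then 1 else - 1)"
  have \<sigma>T: "\<sigma> * T = of_int n * pi / k"
    using \<sigma> by (auto simp: T_def n_def)
  have "is_solution (riccati_field \<sigma> (k\<^sup>2) c) UNIV x"
    unfolding x_def W_def by (rule riccati_field_solution[OF b_1])
  moreover have "x 0 = z0"
    using riccati_orbit_cayley_0[OF _ w0_ne] k
    by (simp flip: to_complex_inject add: x W_def b_def w0_def)
  moreover have "T > 0"
    using k \<sigma> by (simp add: T_def)
  moreover have "x (t + T) = x t" for t
    using riccati_orbit_periodic[of k b "\<sigma> * t" n] k
    by (simp add: x_def W_def distrib_left \<sigma>T)
  ultimately have "periodic_solution (riccati_field \<sigma> (k\<^sup>2) c) z0 T x"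
    by (simp add: periodic_solution_def)
  moreover have "sgn (snd (x t) - Im c) = sgn (snd z0 - Im c)" for t
    using sgn_Im_riccati_orbit[OF k, of b "\<sigma> * t"] sgn_b by (simp add: x_def W_def)
  moreover have "(\<lambda>u. to_complex (x (T * u))) = (\<lambda>u. c + riccati_orbit k b (of_int n * pi / k * u))"
    by (simp add: x W_def \<sigma>T flip: mult.assoc)
  moreover have "e = c + of_real (sgn (1 - norm b)) * \<i> * of_real k"
    by (simp add: e_def sgn_b)
  moreover have "n \<noteq> 0"
    by (simp add: n_def)
  ultimately show ?thesis
    using that riccati_orbit_winding_number[OF k b_1 b_ne[folded b_def], of n c] by simp
qed

lemma riccati_field_filled_with_periodic_orbits:
  assumes "K > 0" and "\<sigma> \<noteq> 0" and "\<rho> = 1 \<or> \<rho> = -1"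
  shows "filled_with_periodic_orbits (riccati_field \<sigma> K c) {z. sgn (snd z - Im c) = \<rho>}"
proof -
  define k where "k = sqrt K"
  have k: "k > 0" and K: "K = k\<^sup>2"
    using assms(1) by (simp_all add: k_def)
  let ?S = "{z. sgn (snd z - Im c) = \<rho>}"
  have equilibrium_iff: "z \<in> ?S \<and> riccati_field \<sigma> K c z = 0 \<longleftrightarrow> to_complex z = c + of_real \<rho> * \<i> * of_real k" for z
    using assms(3) k unfolding K riccati_field_eq_0_iff[OF assms(2)]
    by (auto simp: to_complex_def complex_eq_iff sgn_if)
  show ?thesis
    unfolding filled_with_periodic_orbits_def
  proof (intro conjI ballI impI)
    have "to_complex (Re c, Im c + \<rho> * k) = c + of_real \<rho> * \<i> * of_real k"
      by (simp add: to_complex_def complex_eq_iff)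
    then show "\<exists>e\<in>?S. riccati_field \<sigma> K c e = 0"
      using equilibrium_iff by blast
  next
    fix z0 assume z0: "z0 \<in> ?S" and moving: "riccati_field \<sigma> K c z0 \<noteq> 0"
    then have "snd z0 \<noteq> Im c"
      using assms(3) by auto
    have \<rho>: "sgn (snd z0 - Im c) = \<rho>"
      using z0 by simp
    from riccati_field_periodic_orbit[OF k assms(2) \<open>snd z0 \<noteq> Im c\<close>] moving
    obtain x T where periodic: "periodic_solution (riccati_field \<sigma> K c) z0 T x"
      and stays: "\<And>t. sgn (snd (x t) - Im c) = \<rho>"
      and winds: "c + of_real \<rho> * \<i> * of_real k \<notin> path_image (\<lambda>u. to_complex (x (T * u)))"
        "winding_number (\<lambda>u. to_complex (x (T * u))) (c + of_real \<rho> * \<i> * of_real k) \<noteq> 0"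
      unfolding K \<rho> by blast
    show "\<exists>x T. periodic_solution (riccati_field \<sigma> K c) z0 T x \<and> (\<forall>t. x t \<in> ?S) \<and>
        (\<forall>e\<in>?S. riccati_field \<sigma> K c e = 0 \<longrightarrow>
          to_complex e \<notin> path_image (\<lambda>u. to_complex (x (T * u))) \<and>
          winding_number (\<lambda>u. to_complex (x (T * u))) (to_complex e) \<noteq> 0)"
    proof (intro exI conjI allI ballI impI)
      fix e assume "e \<in> ?S" and "riccati_field \<sigma> K c e = 0"
      then have "to_complex e = c + of_real \<rho> * \<i> * of_real k"
        using equilibrium_iff by blast
      with winds show "to_complex e \<notin> path_image (\<lambda>u. to_complex (x (T * u)))"
        and "winding_number (\<lambda>u. to_complex (x (T * u))) (to_complex e) \<noteq> 0"
        by simp_all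
    qed (use periodic stays in auto)
  qed
qed

lemma riccati_field_filled_half_planes:
  assumes "K > 0" and "\<sigma> \<noteq> 0"
  shows "filled_with_periodic_orbits (riccati_field \<sigma> K c) {z. snd z < Im c}"
    and "filled_with_periodic_orbits (riccati_field \<sigma> K c) {z. snd z > Im c}"
proof -
  have "{z. snd z < Im c} = {z. sgn (snd z - Im c) = -1}" and "{z. snd z > Im c} = {z. sgn (snd z - Im c) = 1}"
    by (auto simp: sgn_if)
  then show "filled_with_periodic_orbits (riccati_field \<sigma> K c) {z. snd z < Im c}"
    and "filled_with_periodic_orbits (riccati_field \<sigma> K c) {z. snd z > Im c}"
    by (metis riccati_field_filled_with_periodic_orbits[OF assms])+
qed

lemma riccati_field_dynamics:
  assumes "\<sigma> \<noteq> 0"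
  shows "line_invariant (riccati_field \<sigma> K c) (Im c) \<and>
    conserved_off_line (riccati_field \<sigma> K c) (riccati_hamiltonian \<sigma> K c) (Im c) \<and>
    rescaled_hamiltonian (riccati_field \<sigma> K c) (riccati_hamiltonian \<sigma> K c) (Im c) \<and>
    (K > 0 \<longrightarrow> filled_with_periodic_orbits (riccati_field \<sigma> K c) {z. snd z < Im c} \<and>
               filled_with_periodic_orbits (riccati_field \<sigma> K c) {z. snd z > Im c})"
  using riccati_field_line_invariant riccati_field_rescaled_hamiltonian
    conserved_off_line_if_rescaled_hamiltonian riccati_field_filled_half_planes[OF _ assms]
  by blast

section \<open>The two charts\<close>

lemma F0_eq_riccati_field:
  assumes "\<alpha> \<noteq> 0" and "\<Omega> = (\<beta>/(1+c))/\<alpha> - s^2/2"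
  shows "F0 \<alpha> \<beta> c h \<mu> s \<Omega> =
    riccati_field 1 (\<Omega> - h + \<mu> - s^2/4 * (\<alpha>^2 - 1)) (Complex (- \<alpha> * s / 2) (- s / 2))"
proof -
  define B where "B = \<beta>/(1+c)"
  have "\<alpha> * \<Omega> = B - \<alpha> * s^2/2"
    using assms unfolding B_def[symmetric] by (simp add: ring_distribs)
  then show ?thesis
    unfolding F0_def B_def[symmetric]
    by (intro ext) (simp add: case_prod_beta riccati_field_def to_complex_def Let_def power2_eq_square field_simps)
qed

lemma H0_eq_riccati_hamiltonian:
  assumes "\<Omega> = (\<beta>/(1+c))/\<alpha> - s^2/2"
  shows "H0 \<alpha> \<beta> c h \<mu> s =
    riccati_hamiltonian 1 (\<Omega> - h + \<mu> - s^2/4 * (\<alpha>^2 - 1)) (Complex (- \<alpha> * s / 2) (- s / 2))"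
proof -
  define B where "B = (\<beta>/(1+c))/\<alpha>"
  have "B = \<Omega> + s^2/2"
    using assms unfolding B_def[symmetric] by simp
  then have numerator: "p^2 + q^2 + \<alpha> * s * p + s * q - h + B + \<mu>
      = (p + \<alpha> * s / 2)^2 + (q + s / 2)^2 + (\<Omega> - h + \<mu> - s^2/4 * (\<alpha>^2 - 1))" for p q
    by (simp add: power2_eq_square field_simps)
  show ?thesis
    unfolding H0_def B_def[symmetric] riccati_hamiltonian_def numerator by simp
qed

lemma Fpi_eq_riccati_field:
  assumes "\<alpha> \<noteq> 0" and "\<Omega> = (\<beta>/(1-c))/\<alpha> + s^2/2"
  shows "Fpi \<alpha> \<beta> c h \<mu> s \<Omega> =
    riccati_field (-1) (h - \<Omega> + \<mu> + s^2/4 * (1 - \<alpha>^2)) (Complex (\<alpha> * s / 2) (s / 2))"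
proof -
  define B where "B = \<beta>/(1-c)"
  have "\<alpha> * \<Omega> = B + \<alpha> * s^2/2"
    using assms unfolding B_def[symmetric] by (simp add: ring_distribs)
  then show ?thesis
    unfolding Fpi_def B_def[symmetric]
    by (intro ext) (simp add: case_prod_beta riccati_field_def to_complex_def Let_def power2_eq_square field_simps)
qed

lemma Hpi_eq_riccati_hamiltonian:
  assumes "\<Omega> = (\<beta>/(1-c))/\<alpha> + s^2/2"
  shows "Hpi \<alpha> \<beta> c h \<mu> s =
    riccati_hamiltonian (-1) (h - \<Omega> + \<mu> + s^2/4 * (1 - \<alpha>^2)) (Complex (\<alpha> * s / 2) (s / 2))"
proof -
  define B where "B = (\<beta>/(1-c))/\<alpha>"
  have "B = \<Omega> - s^2/2"
    using assms unfolding B_def[symmetric] by simp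
  then have numerator: "p^2 + q^2 - \<alpha> * s * p - s * q + h - B + \<mu>
      = (p - \<alpha> * s / 2)^2 + (q - s / 2)^2 + (h - \<Omega> + \<mu> + s^2/4 * (1 - \<alpha>^2))" for p q
    by (simp add: power2_eq_square field_simps)
  show ?thesis
    unfolding Hpi_def B_def[symmetric] riccati_hamiltonian_def numerator by simp
qed

lemma F0_dynamics:
  assumes "\<alpha> \<noteq> 0" and "\<Omega> = (\<beta>/(1+c))/\<alpha> - s^2/2"
  shows "line_invariant (F0 \<alpha> \<beta> c h \<mu> s \<Omega>) (-s/2) \<and>
    conserved_off_line (F0 \<alpha> \<beta> c h \<mu> s \<Omega>) (H0 \<alpha> \<beta> c h \<mu> s) (-s/2) \<and>
    rescaled_hamiltonian (F0 \<alpha> \<beta> c h \<mu> s \<Omega>) (H0 \<alpha> \<beta> c h \<mu> s) (-s/2) \<and>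
    (\<Omega> > h - \<mu> + s^2/4 * (\<alpha>^2 - 1) \<longrightarrow>
       filled_with_periodic_orbits (F0 \<alpha> \<beta> c h \<mu> s \<Omega>) {z. snd z < -s/2} \<and>
       filled_with_periodic_orbits (F0 \<alpha> \<beta> c h \<mu> s \<Omega>) {z. snd z > -s/2})"
proof -
  have "\<Omega> > h - \<mu> + s^2/4 * (\<alpha>^2 - 1) \<longleftrightarrow> \<Omega> - h + \<mu> - s^2/4 * (\<alpha>^2 - 1) > 0"
    by linarith
  then show ?thesis
    using riccati_field_dynamics[of 1 "\<Omega> - h + \<mu> - s^2/4 * (\<alpha>^2 - 1)" "Complex (- \<alpha> * s / 2) (- s / 2)"]
    unfolding F0_eq_riccati_field[OF assms] H0_eq_riccati_hamiltonian[OF assms(2)] by simp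
qed

lemma Fpi_dynamics:
  assumes "\<alpha> \<noteq> 0" and "\<Omega> = (\<beta>/(1-c))/\<alpha> + s^2/2"
  shows "line_invariant (Fpi \<alpha> \<beta> c h \<mu> s \<Omega>) (s/2) \<and>
    conserved_off_line (Fpi \<alpha> \<beta> c h \<mu> s \<Omega>) (Hpi \<alpha> \<beta> c h \<mu> s) (s/2) \<and>
    rescaled_hamiltonian (Fpi \<alpha> \<beta> c h \<mu> s \<Omega>) (Hpi \<alpha> \<beta> c h \<mu> s) (s/2) \<and>
    (\<Omega> < h + \<mu> + s^2/4 * (1 - \<alpha>^2) \<longrightarrow>
       filled_with_periodic_orbits (Fpi \<alpha> \<beta> c h \<mu> s \<Omega>) {z. snd z < s/2} \<and>
       filled_with_periodic_orbits (Fpi \<alpha> \<beta> c h \<mu> s \<Omega>) {z. snd z > s/2})"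
proof -
  have "\<Omega> < h + \<mu> + s^2/4 * (1 - \<alpha>^2) \<longleftrightarrow> h - \<Omega> + \<mu> + s^2/4 * (1 - \<alpha>^2) > 0"
    by linarith
  then show ?thesis
    using riccati_field_dynamics[of "-1" "h - \<Omega> + \<mu> + s^2/4 * (1 - \<alpha>^2)" "Complex (\<alpha> * s / 2) (s / 2)"]
    unfolding Fpi_eq_riccati_field[OF assms] Hpi_eq_riccati_hamiltonian[OF assms(2)] by simp
qed

theorem proposition1:
  fixes \<alpha> \<beta> c h \<mu> s \<Omega> :: real
  assumes "\<alpha> > 0" and "\<beta> \<ge> 0" and "-1 < c" and "c < 1"
  shows
   "(\<Omega> = (\<beta>/(1+c))/\<alpha> - s^2/2 \<longrightarrow>
       line_invariant (F0 \<alpha> \<beta> c h \<mu> s \<Omega>) (-s/2) \<and>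
       conserved_off_line (F0 \<alpha> \<beta> c h \<mu> s \<Omega>) (H0 \<alpha> \<beta> c h \<mu> s) (-s/2) \<and>
       rescaled_hamiltonian (F0 \<alpha> \<beta> c h \<mu> s \<Omega>) (H0 \<alpha> \<beta> c h \<mu> s) (-s/2) \<and>
       (\<Omega> > h - \<mu> + s^2/4  *  (\<alpha>^2 - 1) \<longrightarrow>
          filled_with_periodic_orbits (F0 \<alpha> \<beta> c h \<mu> s \<Omega>) {z. snd z < -s/2} \<and>
          filled_with_periodic_orbits (F0 \<alpha> \<beta> c h \<mu> s \<Omega>) {z. snd z > -s/2}))
  \<and> (\<Omega> = (\<beta>/(1-c))/\<alpha> + s^2/2 \<longrightarrow>
       line_invariant (Fpi \<alpha> \<beta> c h \<mu> s \<Omega>) (s/2) \<and>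
       conserved_off_line (Fpi \<alpha> \<beta> c h \<mu> s \<Omega>) (Hpi \<alpha> \<beta> c h \<mu> s) (s/2) \<and>
       rescaled_hamiltonian (Fpi \<alpha> \<beta> c h \<mu> s \<Omega>) (Hpi \<alpha> \<beta> c h \<mu> s) (s/2) \<and>
       (\<Omega> < h + \<mu> + s^2/4  *  (1 - \<alpha>^2) \<longrightarrow>
          filled_with_periodic_orbits (Fpi \<alpha> \<beta> c h \<mu> s \<Omega>) {z. snd z < s/2} \<and>
          filled_with_periodic_orbits (Fpi \<alpha> \<beta> c h \<mu> s \<Omega>) {z. snd z > s/2}))"
proof -
  have "\<alpha> \<noteq> 0"
    using assms(1) by simp
  then show ?thesis
    using F0_dynamics Fpi_dynamics by blast
qed

end
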